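(* Let $\mu$ be a distribution over $\{0,1\}^V$ and $\theta\in(0,1)$. Let $(X^{(t)}_{\pi\text{-GD}})_{t\ge0}$ be the Glauber dynamics on $\pi$ started from $X^{(0)}_{\pi\text{-GD}}=\mathsf{lift}(\mathbf 1_V)$ and $(X^{(t)}_{\mu\text{-GD}})_{t\ge0}$ the Glauber dynamics on $\mu$ started from $\mathbf 1_V$. Then for every integer $t\ge0$, $X^{(t)}_{\pi\text{-GD}}$ and $\mathsf{lift}(X^{(t)}_{\mu\text{-GD}})$ are identically distributed, and $\mathsf{contr}(X^{(t)}_{\pi\text{-GD}})$ and $X^{(t)}_{\mu\text{-GD}}$ are identically distributed.
   Context: $\mathsf{lift}:\{0,1\}^V\to\{0,1,\star\}^V$ is random: independently per coordinate, $0\mapsto0$, $1\mapsto\star$ w.p. $1-\theta$, $1\mapsto1$ w.p. $\theta$ (applied with fresh independent randomness). $\mathsf{contr}$: $0\mapsto0$, $1,\star\mapsto1$ coordinatewise. $\pi$ is the law of $\mathsf{lift}(X)$ for $X\sim\mu$. Glauber dynamics on a distribution $\nu$: pick $v\in V$ uniformly and resample coordinate $v$ from $\nu$ conditioned on the other coordinates. *)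

theory Defs
  imports "HOL-Probability.Probability"
begin

datatype spin = Zero | One | Star

definition lift_coord :: "real \<Rightarrow> bool \<Rightarrow> spin pmf" where
  "lift_coord \<theta> b = (if b then map_pmf (\<lambda>c. if c then One else Star) (bernoulli_pmf \<theta>)
                       else return_pmf Zero)"

definition lift :: "real \<Rightarrow> ('v::finite \<Rightarrow> bool) \<Rightarrow> ('v \<Rightarrow> spin) pmf" where
  "lift \<theta> x = Pi_pmf UNIV Zero (\<lambda>v. lift_coord \<theta> (x v))"

definition contr :: "('v \<Rightarrow> spin) \<Rightarrow> ('v \<Rightarrow> bool)" where
  "contr z = (\<lambda>v. z v \<noteq> Zero)"

text \<open>pi = law of lift(X) for X ~ mu (fresh randomness).\<close>
definition lifted_dist :: "real \<Rightarrow> ('v::finite \<Rightarrow> bool) pmf \<Rightarrow> ('v \<Rightarrow> spin) pmf" where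
  "lifted_dist \<theta> \<mu> = bind_pmf \<mu> (lift \<theta>)"

text \<open>Convention: if the conditioning event has nu-probability 0,
  the state is left unchanged.\<close>
definition glauber_step :: "('v::finite \<Rightarrow> 'b) pmf \<Rightarrow> ('v \<Rightarrow> 'b) \<Rightarrow> ('v \<Rightarrow> 'b) pmf" where
  "glauber_step \<nu> x = bind_pmf (pmf_of_set (UNIV :: 'v set)) (\<lambda>v.
      let S = {y. \<forall>w. w \<noteq> v \<longrightarrow> y w = x w} in
      if set_pmf \<nu> \<inter> S = {} then return_pmf x else cond_pmf \<nu> S)"

primrec glauber_run :: "('v::finite \<Rightarrow> 'b) pmf \<Rightarrow> ('v \<Rightarrow> 'b) pmf \<Rightarrow> nat \<Rightarrow> ('v \<Rightarrow> 'b) pmf" where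
  "glauber_run \<nu> init 0 = init"
| "glauber_run \<nu> init (Suc t) = bind_pmf (glauber_run \<nu> init t) (glauber_step \<nu>)"

end

theory Submission
  imports Defs
begin

text \<open>
  Since \<open>\<pi>(y) = \<mu>(contr y) \<cdot> \<Prod>\<^sub>w weight(y w)\<close>, for \<open>z\<close> in the support of
  \<open>lift \<theta> x\<close> the \<open>\<pi>\<close>-conditional law of the spin at \<open>v\<close> given \<open>z\<close> off \<open>v\<close> is
  proportional to \<open>\<mu>(x(v := c \<noteq> 0)) \<cdot> weight c\<close>: the weights of the other coordinates
  cancel, so it is the \<open>\<mu>\<close>-conditional law of the spin at \<open>v\<close> given \<open>x\<close> off \<open>v\<close>,
  lifted.  Hence lifting intertwines the two heat-bath updates at every site, and thus the two
  Glauber steps; induction on \<open>t\<close> gives the first identity, and the second follows because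
  \<open>contr\<close> undoes \<open>lift\<close>.
\<close>

definition spin_weight :: "real \<Rightarrow> spin \<Rightarrow> real" where
  "spin_weight \<theta> s = (case s of Zero \<Rightarrow> 1 | One \<Rightarrow> \<theta> | Star \<Rightarrow> 1 - \<theta>)"

definition lift_weight :: "real \<Rightarrow> ('v::finite \<Rightarrow> spin) \<Rightarrow> real" where
  "lift_weight \<theta> y = (\<Prod>v\<in>UNIV. spin_weight \<theta> (y v))"

definition fiber :: "'v \<Rightarrow> ('v \<Rightarrow> 'b) \<Rightarrow> ('v \<Rightarrow> 'b) set" where
  "fiber v x = {y. \<forall>w. w \<noteq> v \<longrightarrow> y w = x w}"

definition resample :: "('v \<Rightarrow> 'b) pmf \<Rightarrow> 'v \<Rightarrow> ('v \<Rightarrow> 'b) \<Rightarrow> ('v \<Rightarrow> 'b) pmf" where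
  "resample \<nu> v x = (if set_pmf \<nu> \<inter> fiber v x = {} then return_pmf x else cond_pmf \<nu> (fiber v x))"

lemma glauber_step_conv_resample:
  "glauber_step \<nu> x = bind_pmf (pmf_of_set UNIV) (\<lambda>v. resample \<nu> v x)"
  unfolding glauber_step_def resample_def fiber_def Let_def ..

lemma spin_weight_pos: "0 < \<theta> \<Longrightarrow> \<theta> < 1 \<Longrightarrow> 0 < spin_weight \<theta> s"
  by (cases s) (auto simp: spin_weight_def)

lemma lift_weight_pos: "0 < \<theta> \<Longrightarrow> \<theta> < 1 \<Longrightarrow> 0 < lift_weight \<theta> y"
  unfolding lift_weight_def by (intro prod_pos) (auto intro: spin_weight_pos)

lemma lift_weight_fun_upd:
  "lift_weight \<theta> (y(v := s)) = spin_weight \<theta> s * (\<Prod>w\<in>-{v}. spin_weight \<theta> (y w))"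
  unfolding lift_weight_def by (subst prod.remove[of UNIV v]) (auto simp: Compl_eq_Diff_UNIV intro!: prod.cong)

lemma contr_fun_upd: "contr (y(v := s)) = (contr y)(v := s \<noteq> Zero)"
  by (auto simp: contr_def)

lemma pmf_lift_coord:
  assumes "0 \<le> \<theta>" "\<theta> \<le> 1"
  shows "pmf (lift_coord \<theta> b) s = (if (s \<noteq> Zero) = b then spin_weight \<theta> s else 0)"
proof -
  have inj: "inj (\<lambda>c. if c then One else Star)" by (auto simp: inj_def)
  show ?thesis
    using assms pmf_map_inj'[OF inj, of "bernoulli_pmf \<theta>" True]
      pmf_map_inj'[OF inj, of "bernoulli_pmf \<theta>" False]
    by (cases b; cases s) (auto simp: lift_coord_def spin_weight_def intro!: pmf_map_outside split: if_splits)
qed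

lemma pmf_lift:
  assumes "0 \<le> \<theta>" "\<theta> \<le> 1"
  shows "pmf (lift \<theta> x) y = (if contr y = x then lift_weight \<theta> y else 0)"
proof -
  have "pmf (lift \<theta> x) y = (\<Prod>v\<in>UNIV. if (y v \<noteq> Zero) = x v then spin_weight \<theta> (y v) else 0)"
    using assms unfolding lift_def by (simp add: pmf_Pi pmf_lift_coord)
  also have "\<dots> = (if contr y = x then lift_weight \<theta> y else 0)"
    by (auto simp: lift_weight_def contr_def fun_eq_iff intro!: prod.cong)
  finally show ?thesis .
qed

lemma contr_eq_of_set_pmf_lift:
  assumes "0 \<le> \<theta>" "\<theta> \<le> 1" "y \<in> set_pmf (lift \<theta> x)"
  shows "contr y = x"
  using assms by (auto simp: set_pmf_iff pmf_lift split: if_splits)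

lemma map_contr_lift:
  assumes "0 \<le> \<theta>" "\<theta> \<le> 1"
  shows "map_pmf contr (lift \<theta> x) = return_pmf x"
  using assms by (simp add: map_pmf_eq_return_pmf_iff contr_eq_of_set_pmf_lift)

lemma pmf_bind_determined_source:
  assumes "\<And>b. pmf (K b) a = (if g a = b then w else 0)"
  shows "pmf (bind_pmf p K) a = pmf p (g a) * w"
proof -
  have "pmf (bind_pmf p K) a = (\<Sum>b\<in>{g a}. pmf (K b) a * pmf p b)"
    unfolding pmf_bind using assms by (intro integral_measure_pmf_real) (auto split: if_splits)
  then show ?thesis by (simp add: assms)
qed

lemma pmf_lifted_dist:
  assumes "0 \<le> \<theta>" "\<theta> \<le> 1"
  shows "pmf (lifted_dist \<theta> \<mu>) y = pmf \<mu> (contr y) * lift_weight \<theta> y"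
  unfolding lifted_dist_def using assms by (intro pmf_bind_determined_source) (simp add: pmf_lift)

lemma pmf_bind_lift_coord:
  assumes "0 \<le> \<theta>" "\<theta> \<le> 1"
  shows "pmf (bind_pmf q (lift_coord \<theta>)) s = pmf q (s \<noteq> Zero) * spin_weight \<theta> s"
  using assms by (intro pmf_bind_determined_source) (simp add: pmf_lift_coord)

lemma set_pmf_lifted_dist:
  fixes \<mu> :: "('v::finite \<Rightarrow> bool) pmf"
  assumes "0 < \<theta>" "\<theta> < 1"
  shows "set_pmf (lifted_dist \<theta> \<mu>) = contr -` set_pmf \<mu>"
proof -
  have "lift_weight \<theta> y \<noteq> 0" for y :: "'v \<Rightarrow> spin"
    using lift_weight_pos[OF assms] by (metis less_irrefl)
  then show ?thesis
    using assms by (auto simp: set_pmf_iff pmf_lifted_dist)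
qed

lemma contr_image_fiber: "contr ` fiber v y = fiber v (contr y)"
proof
  show "contr ` fiber v y \<subseteq> fiber v (contr y)"
    by (auto simp: fiber_def contr_def)
  show "fiber v (contr y) \<subseteq> contr ` fiber v y"
  proof
    fix x assume "x \<in> fiber v (contr y)"
    then have "x = contr (y(v := if x v then One else Zero))"
      by (auto simp: fiber_def contr_def fun_eq_iff)
    then show "x \<in> contr ` fiber v y"
      by (auto simp: fiber_def)
  qed
qed

lemma lifted_dist_disjoint_fiber_iff:
  assumes "0 < \<theta>" "\<theta> < 1"
  shows "set_pmf (lifted_dist \<theta> \<mu>) \<inter> fiber v y = {} \<longleftrightarrow> set_pmf \<mu> \<inter> fiber v (contr y) = {}"
  unfolding set_pmf_lifted_dist[OF assms] contr_image_fiber[symmetric] by blast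

lemma Pi_pmf_fun_upd:
  assumes "finite A" "v \<in> A"
  shows "Pi_pmf A d (p(v := q)) = bind_pmf (Pi_pmf A d p) (\<lambda>f. map_pmf (\<lambda>c. f(v := c)) q)"
proof -
  have insert: "Pi_pmf A d r
      = bind_pmf (r v) (\<lambda>c. bind_pmf (Pi_pmf (A - {v}) d r) (\<lambda>f. return_pmf (f(v := c))))" for r
    using Pi_pmf_insert'[of "A - {v}" v d r] assms by (simp add: insert_absorb)
  have overwrite: "fun_upd (f(v := c)) v = fun_upd f v" for f :: "'a \<Rightarrow> 'b" and c
    by (simp add: fun_eq_iff)
  have "Pi_pmf (A - {v}) d (p(v := q)) = Pi_pmf (A - {v}) d p"
    by (rule Pi_pmf_cong) auto
  then have "Pi_pmf A d (p(v := q))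
      = bind_pmf (Pi_pmf (A - {v}) d p) (\<lambda>f. map_pmf (\<lambda>c. f(v := c)) q)"
    by (simp add: insert[of "p(v := q)"] bind_commute_pmf[of q] map_pmf_def)
  also have "\<dots> = bind_pmf (Pi_pmf A d p) (\<lambda>f. map_pmf (\<lambda>c. f(v := c)) q)"
    by (simp add: insert[of p] bind_assoc_pmf bind_return_pmf overwrite)
  finally show ?thesis .
qed

lemma lift_fun_upd:
  "lift \<theta> (x(v := b)) = bind_pmf (lift \<theta> x) (\<lambda>z. map_pmf (\<lambda>c. z(v := c)) (lift_coord \<theta> b))"
proof -
  have "(\<lambda>w. lift_coord \<theta> ((x(v := b)) w)) = (\<lambda>w. lift_coord \<theta> (x w))(v := lift_coord \<theta> b)"
    by auto
  then show ?thesis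
    unfolding lift_def by (simp add: Pi_pmf_fun_upd)
qed

lemma cond_pmf_eqI:
  assumes "set_pmf \<nu> \<inter> S \<noteq> {}" "set_pmf p \<subseteq> S" "\<And>y. y \<in> S \<Longrightarrow> pmf \<nu> y = c * pmf p y"
  shows "cond_pmf \<nu> S = p"
proof (rule pmf_eqI)
  fix y
  have "measure p S = 1"
    using assms(2) by (subst measure_pmf.prob_eq_1) (auto simp: AE_measure_pmf_iff)
  moreover have "measure \<nu> S = c * measure p S"
    using assms(3) by (simp add: measure_pmf_conv_infsetsum infsetsum_cmult_right[OF pmf_abs_summable])
  moreover have "measure \<nu> S > 0"
    using assms(1) by (auto intro: measure_pmf_posI)
  ultimately show "pmf (cond_pmf \<nu> S) y = pmf p y"
    using assms by (auto simp: pmf_cond set_pmf_iff)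
qed

lemma cond_pmf_fiber:
  assumes "set_pmf \<nu> \<inter> fiber v x \<noteq> {}"
  shows "cond_pmf \<nu> (fiber v x)
           = map_pmf (\<lambda>a. x(v := a)) (map_pmf (\<lambda>y. y v) (cond_pmf \<nu> (fiber v x)))"
proof -
  have "x(v := y v) = y" if "y \<in> set_pmf (cond_pmf \<nu> (fiber v x))" for y
    using that set_cond_pmf[OF assms] by (auto simp: fiber_def fun_eq_iff)
  then show ?thesis
    by (simp add: map_pmf_comp map_pmf_idI)
qed

lemma pmf_cond_pmf_fiber_component:
  assumes "set_pmf \<nu> \<inter> fiber v x \<noteq> {}"
  shows "pmf (map_pmf (\<lambda>y. y v) (cond_pmf \<nu> (fiber v x))) a
           = pmf \<nu> (x(v := a)) / measure \<nu> (fiber v x)"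
proof -
  have "inj (\<lambda>a. x(v := a))"
    by (auto simp: inj_def fun_eq_iff)
  then have "pmf (map_pmf (\<lambda>y. y v) (cond_pmf \<nu> (fiber v x))) a = pmf (cond_pmf \<nu> (fiber v x)) (x(v := a))"
    by (subst cond_pmf_fiber[OF assms]) (simp add: pmf_map_inj')
  then show ?thesis
    using assms by (simp add: pmf_cond fiber_def)
qed

lemma resample_lifted_dist:
  fixes \<mu> :: "('v::finite \<Rightarrow> bool) pmf"
  assumes \<theta>: "0 < \<theta>" "\<theta> < 1" and meets: "set_pmf \<mu> \<inter> fiber v (contr z) \<noteq> {}"
  defines "q \<equiv> map_pmf (\<lambda>y. y v) (cond_pmf \<mu> (fiber v (contr z)))"
  shows "resample (lifted_dist \<theta> \<mu>) v z = map_pmf (\<lambda>c. z(v := c)) (bind_pmf q (lift_coord \<theta>))"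
proof -
  define R where "R = (\<Prod>w\<in>-{v}. spin_weight \<theta> (z w))"
  define m where "m = measure \<mu> (fiber v (contr z))"
  have "m > 0"
    using meets by (auto simp: m_def intro: measure_pmf_posI)
  have meets_lifted: "set_pmf (lifted_dist \<theta> \<mu>) \<inter> fiber v z \<noteq> {}"
    using meets lifted_dist_disjoint_fiber_iff[OF \<theta>] by blast
  have "cond_pmf (lifted_dist \<theta> \<mu>) (fiber v z) = map_pmf (\<lambda>c. z(v := c)) (bind_pmf q (lift_coord \<theta>))"
  proof (rule cond_pmf_eqI[OF meets_lifted])
    show "set_pmf (map_pmf (\<lambda>c. z(v := c)) (bind_pmf q (lift_coord \<theta>))) \<subseteq> fiber v z"
      by (auto simp: fiber_def)
    fix y assume "y \<in> fiber v z"
    then have y: "y = z(v := y v)"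
      by (auto simp: fiber_def fun_eq_iff)
    have inj: "inj (\<lambda>c. z(v := c))"
      by (auto simp: inj_def fun_eq_iff)
    have "pmf (lifted_dist \<theta> \<mu>) y = pmf \<mu> ((contr z)(v := y v \<noteq> Zero)) * (spin_weight \<theta> (y v) * R)"
      using \<theta> by (subst y) (simp add: pmf_lifted_dist contr_fun_upd lift_weight_fun_upd R_def)
    also have "\<dots> = (R * m) * (pmf q (y v \<noteq> Zero) * spin_weight \<theta> (y v))"
      using \<open>m > 0\<close> by (simp add: q_def pmf_cond_pmf_fiber_component[OF meets] m_def)
    also have "pmf q (y v \<noteq> Zero) * spin_weight \<theta> (y v)
        = pmf (map_pmf (\<lambda>c. z(v := c)) (bind_pmf q (lift_coord \<theta>))) y"
      using \<theta> by (subst y, subst pmf_map_inj'[OF inj]) (simp add: pmf_bind_lift_coord)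
    finally show "pmf (lifted_dist \<theta> \<mu>) y
        = (R * m) * pmf (map_pmf (\<lambda>c. z(v := c)) (bind_pmf q (lift_coord \<theta>))) y" .
  qed
  then show ?thesis
    using meets_lifted by (simp add: resample_def)
qed

lemma bind_lift_resample:
  fixes \<mu> :: "('v::finite \<Rightarrow> bool) pmf"
  assumes \<theta>: "0 < \<theta>" "\<theta> < 1"
  shows "bind_pmf (lift \<theta> x) (resample (lifted_dist \<theta> \<mu>) v) = bind_pmf (resample \<mu> v x) (lift \<theta>)"
proof (cases "set_pmf \<mu> \<inter> fiber v x = {}")
  case True
  have "resample (lifted_dist \<theta> \<mu>) v z = return_pmf z" if "z \<in> set_pmf (lift \<theta> x)" for z
    using True contr_eq_of_set_pmf_lift[OF _ _ that] \<theta>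
    by (simp add: resample_def lifted_dist_disjoint_fiber_iff)
  then have "bind_pmf (lift \<theta> x) (resample (lifted_dist \<theta> \<mu>) v) = lift \<theta> x"
    by (simp add: bind_return_pmf' cong: bind_pmf_cong)
  then show ?thesis
    using True by (simp add: resample_def bind_return_pmf)
next
  case False
  define q where "q = map_pmf (\<lambda>y. y v) (cond_pmf \<mu> (fiber v x))"
  have "bind_pmf (lift \<theta> x) (resample (lifted_dist \<theta> \<mu>) v)
      = bind_pmf (lift \<theta> x) (\<lambda>z. map_pmf (\<lambda>c. z(v := c)) (bind_pmf q (lift_coord \<theta>)))"
  proof (intro bind_pmf_cong refl)
    fix z assume "z \<in> set_pmf (lift \<theta> x)"
    then have "contr z = x"
      using \<theta> by (intro contr_eq_of_set_pmf_lift) auto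
    then show "resample (lifted_dist \<theta> \<mu>) v z = map_pmf (\<lambda>c. z(v := c)) (bind_pmf q (lift_coord \<theta>))"
      using resample_lifted_dist[OF \<theta>, of \<mu> v z] False by (simp add: q_def)
  qed
  also have "\<dots> = bind_pmf q (\<lambda>b. bind_pmf (lift \<theta> x) (\<lambda>z. map_pmf (\<lambda>c. z(v := c)) (lift_coord \<theta> b)))"
    by (simp add: map_bind_pmf bind_commute_pmf[of q])
  also have "\<dots> = bind_pmf q (\<lambda>b. lift \<theta> (x(v := b)))"
    by (simp add: lift_fun_upd)
  also have "\<dots> = bind_pmf (map_pmf (\<lambda>b. x(v := b)) q) (lift \<theta>)"
    by (simp add: bind_map_pmf)
  also have "map_pmf (\<lambda>b. x(v := b)) q = resample \<mu> v x"
    unfolding q_def cond_pmf_fiber[OF False, symmetric] resample_def using False by simp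
  finally show ?thesis .
qed

lemma bind_lift_glauber_step:
  fixes \<mu> :: "('v::finite \<Rightarrow> bool) pmf"
  assumes "0 < \<theta>" "\<theta> < 1"
  shows "bind_pmf (lift \<theta> x) (glauber_step (lifted_dist \<theta> \<mu>)) = bind_pmf (glauber_step \<mu> x) (lift \<theta>)"
  unfolding glauber_step_conv_resample
  by (simp add: bind_commute_pmf[of "lift \<theta> x"] bind_assoc_pmf bind_lift_resample assms)

lemma glauber_run_lifted_dist:
  fixes \<mu> :: "('v::finite \<Rightarrow> bool) pmf"
  assumes "0 < \<theta>" "\<theta> < 1"
  shows "glauber_run (lifted_dist \<theta> \<mu>) (bind_pmf init (lift \<theta>)) t
           = bind_pmf (glauber_run \<mu> init t) (lift \<theta>)"
  by (induction t) (simp_all add: bind_assoc_pmf bind_lift_glauber_step assms)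

lemma map_contr_bind_lift:
  assumes "0 \<le> \<theta>" "\<theta> \<le> 1"
  shows "map_pmf contr (bind_pmf M (lift \<theta>)) = M"
  using assms by (simp add: map_bind_pmf map_contr_lift bind_return_pmf')

theorem lemma4p1:
  fixes \<mu> :: "('v::finite \<Rightarrow> bool) pmf" and \<theta> :: real and t :: nat
  assumes "0 < \<theta>" and "\<theta> < 1"
  shows "glauber_run (lifted_dist \<theta> \<mu>) (lift \<theta> (\<lambda>_. True)) t
           = bind_pmf (glauber_run \<mu> (return_pmf (\<lambda>_. True)) t) (lift \<theta>)
       \<and> map_pmf contr (glauber_run (lifted_dist \<theta> \<mu>) (lift \<theta> (\<lambda>_. True)) t)
           = glauber_run \<mu> (return_pmf (\<lambda>_. True)) t"
proof -
  have "glauber_run (lifted_dist \<theta> \<mu>) (lift \<theta> (\<lambda>_. True)) t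
      = bind_pmf (glauber_run \<mu> (return_pmf (\<lambda>_. True)) t) (lift \<theta>)"
    using glauber_run_lifted_dist[OF assms, of \<mu> "return_pmf (\<lambda>_. True)"] by (simp add: bind_return_pmf)
  then show ?thesis
    using assms by (simp add: map_contr_bind_lift)
qed

end
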